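(* Let $u$ be a countable transitive model of $\mathsf{ZF}$ minus Power Set, let $\mathbb P\in u$ be a partial order with ordering $\le^{\mathbb P}$ and least element $0^{\mathbb P}$, and let $I$ be a non-empty ideal on $\mathbb P$. Let $\mathcal M$ be the development model defined below and let $\tilde\in^{\mathcal M}=\{(\sigma,\tau)\in u^{\mathbb P}\times u^{\mathbb P}:\mathcal M\models\Diamond\Box\,\sigma\in^*\tau\}$. Then $\tilde\in^{\mathcal M}$ is well-founded on $u^{\mathbb P}$, and the Mostowski collapse $\mathrm{mos}$ of $\langle u^{\mathbb P},\tilde\in^{\mathcal M}\rangle$, defined by $\tilde\in^{\mathcal M}$-recursion as $\mathrm{mos}(\tau)=\{\mathrm{mos}(\sigma):\sigma\mathrel{\tilde\in}^{\mathcal M}\tau\}$, satisfies $\mathrm{mos}(\tau)=\mathrm{val}_I(\tau)$ for all $\tau\in u^{\mathbb P}$; consequently the collapsed structure $\langle\{\mathrm{mos}(\tau):\tau\in u^{\mathbb P}\},\in\rangle$ equals the forcing extension $u[I]$.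
   Context: A $\mathbb P$-name is (by $\in$-recursion) a set of ordered pairs $\langle\sigma,p\rangle$ with $\sigma$ a $\mathbb P$-name and $p\in\mathbb P$; $u^{\mathbb P}$ is the set of $\mathbb P$-names belonging to $u$. An ideal on $\mathbb P$ is a set $I\subseteq\mathbb P$ that is downward closed ($q\le^{\mathbb P}p\in I\Rightarrow q\in I$) and directed (any two elements of $I$ have a common upper bound in $I$). (This is the reverse of the usual forcing convention: $I$ plays the role of a filter.) By $\in$-recursion, $\mathrm{val}_I(\tau)=\{\mathrm{val}_I(\sigma):\exists q\in I\,\langle\sigma,q\rangle\in\tau\}$, and $u[I]=\langle\{\mathrm{val}_I(\sigma):\sigma\in u^{\mathbb P}\},\in\rangle$. The development model $\mathcal M$: states are the elements of $I$, the accessibility relation is $\le^{\mathbb P}$ restricted to $I$; at every state $s$ the structure has domain $u^{\mathbb P}$ with the (static) relation $\in$, and a dynamic binary relation $\in^*$ interpreted at $s$ by: $x\in^* y$ iff $x,y\in u^{\mathbb P}$ and there is $s'\le^{\mathbb P}s$ with $\langle x,s'\rangle\in y$. Modal semantics: $\Diamond\psi$ holds at $s$ iff $\psi$ holds at some state $t\ge s$, $\Box$ dually, and $\mathcal M\models\psi$ means $\psi$ holds at every state. *)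

theory Defs
  imports Main "HOL-Library.Countable_Set_Type"
begin

text \<open>Since u is a countable transitive model, every set relevant to the
statement (elements of u, the ideal I, and the values in u[I]) is hereditarily
countable.  We therefore work in the universe V of hereditarily countable,
well-founded sets, realised as a nested datatype.\<close>

datatype V = Set "V cset"

primrec elts :: "V \<Rightarrow> V set" where
  "elts (Set A) = rcset A"

definition mk :: "V set \<Rightarrow> V" where
  "mk A = Set (acset A)"

definition memrel :: "(V \<times> V) set" where
  "memrel = {(x, y). x \<in> elts y}"

definition vpair :: "V \<Rightarrow> V \<Rightarrow> V" where
  "vpair a b = mk {mk {a}, mk {a, b}}"

datatype fm = Mem nat nat | Eq nat nat | Neg fm | Conj fm fm | Ex nat fm

fun sat :: "V set \<Rightarrow> (nat \<Rightarrow> V) \<Rightarrow> fm \<Rightarrow> bool" where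
  "sat M e (Mem i j) = (e i \<in> elts (e j))"
| "sat M e (Eq i j) = (e i = e j)"
| "sat M e (Neg \<phi>) = (\<not> sat M e \<phi>)"
| "sat M e (Conj \<phi> \<psi>) = (sat M e \<phi> \<and> sat M e \<psi>)"
| "sat M e (Ex v \<phi>) = (\<exists>a\<in>M. sat M (e(v := a)) \<phi>)"

definition transitive_set :: "V set \<Rightarrow> bool" where
  "transitive_set M \<longleftrightarrow> (\<forall>x\<in>M. elts x \<subseteq> M)"

definition ZF_minus_model :: "V set \<Rightarrow> bool" where
  "ZF_minus_model M \<longleftrightarrow>
     \<comment> \<open>Extensionality\<close>
     (\<forall>a\<in>M. \<forall>b\<in>M. (\<forall>c\<in>M. c \<in> elts a \<longleftrightarrow> c \<in> elts b) \<longrightarrow> a = b) \<and>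
     \<comment> \<open>Foundation\<close>
     (\<forall>a\<in>M. (\<exists>c\<in>M. c \<in> elts a) \<longrightarrow>
        (\<exists>c\<in>M. c \<in> elts a \<and> (\<forall>d\<in>M. d \<in> elts c \<longrightarrow> d \<notin> elts a))) \<and>
     \<comment> \<open>Pairing\<close>
     (\<forall>a\<in>M. \<forall>b\<in>M. \<exists>c\<in>M. a \<in> elts c \<and> b \<in> elts c) \<and>
     \<comment> \<open>Union\<close>
     (\<forall>a\<in>M. \<exists>c\<in>M. \<forall>b\<in>M. b \<in> elts a \<longrightarrow> (\<forall>d\<in>M. d \<in> elts b \<longrightarrow> d \<in> elts c)) \<and>
     \<comment> \<open>Infinity\<close>
     (\<exists>c\<in>M. (\<exists>z\<in>M. z \<in> elts c \<and> (\<forall>w\<in>M. w \<notin> elts z)) \<and>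
        (\<forall>x\<in>M. x \<in> elts c \<longrightarrow>
           (\<exists>y\<in>M. y \<in> elts c \<and> (\<forall>w\<in>M. w \<in> elts y \<longleftrightarrow> w \<in> elts x \<or> w = x)))) \<and>
     \<comment> \<open>Separation schema\<close>
     (\<forall>\<phi> e. range e \<subseteq> M \<longrightarrow> (\<forall>a\<in>M. \<exists>b\<in>M. \<forall>x\<in>M.
        x \<in> elts b \<longleftrightarrow> x \<in> elts a \<and> sat M (e(0 := x)) \<phi>)) \<and>
     \<comment> \<open>Replacement schema\<close>
     (\<forall>\<phi> e. range e \<subseteq> M \<longrightarrow> (\<forall>a\<in>M.
        (\<forall>x\<in>M. x \<in> elts a \<longrightarrow>
           (\<exists>y\<in>M. sat M (e(0 := x, 1 := y)) \<phi> \<and>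
              (\<forall>y'\<in>M. sat M (e(0 := x, 1 := y')) \<phi> \<longrightarrow> y' = y))) \<longrightarrow>
        (\<exists>b\<in>M. \<forall>y\<in>M. y \<in> elts b \<longleftrightarrow> (\<exists>x\<in>M. x \<in> elts a \<and> sat M (e(0 := x, 1 := y)) \<phi>))))"

definition countable_transitive_ZF_minus_model :: "V set \<Rightarrow> bool" where
  "countable_transitive_ZF_minus_model M \<longleftrightarrow>
     countable M \<and> transitive_set M \<and> ZF_minus_model M"

definition leq :: "V \<Rightarrow> V \<Rightarrow> V \<Rightarrow> bool" where
  "leq leP p q \<longleftrightarrow> vpair p q \<in> elts leP"

definition partial_order_least :: "V \<Rightarrow> V \<Rightarrow> V \<Rightarrow> bool" where
  "partial_order_least Pset leP zero \<longleftrightarrow>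
     (\<forall>z\<in>elts leP. \<exists>p\<in>elts Pset. \<exists>q\<in>elts Pset. z = vpair p q) \<and>
     (\<forall>p\<in>elts Pset. leq leP p p) \<and>
     (\<forall>p\<in>elts Pset. \<forall>q\<in>elts Pset. leq leP p q \<and> leq leP q p \<longrightarrow> p = q) \<and>
     (\<forall>p\<in>elts Pset. \<forall>q\<in>elts Pset. \<forall>r\<in>elts Pset.
        leq leP p q \<and> leq leP q r \<longrightarrow> leq leP p r) \<and>
     zero \<in> elts Pset \<and> (\<forall>p\<in>elts Pset. leq leP zero p)"

inductive is_name :: "V \<Rightarrow> V \<Rightarrow> bool" for Pset :: V where
  "(\<forall>z\<in>elts \<tau>. \<exists>\<sigma> p. z = vpair \<sigma> p \<and> is_name Pset \<sigma> \<and> p \<in> elts Pset)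
     \<Longrightarrow> is_name Pset \<tau>"

definition names_in :: "V set \<Rightarrow> V \<Rightarrow> V set" where
  "names_in u Pset = {\<tau> \<in> u. is_name Pset \<tau>}"

text \<open>Ideal in the paper's (reversed) convention: downward closed and directed.\<close>

definition is_ideal :: "V \<Rightarrow> V \<Rightarrow> V set \<Rightarrow> bool" where
  "is_ideal Pset leP I \<longleftrightarrow> I \<subseteq> elts Pset \<and>
     (\<forall>p\<in>I. \<forall>q\<in>elts Pset. leq leP q p \<longrightarrow> q \<in> I) \<and>
     (\<forall>p\<in>I. \<forall>q\<in>I. \<exists>r\<in>I. leq leP p r \<and> leq leP q r)"

definition val :: "V set \<Rightarrow> V \<Rightarrow> V" where
  "val I = wfrec (memrel\<^sup>+)
     (\<lambda>f \<tau>. mk (f ` {\<sigma>. \<exists>q\<in>I. vpair \<sigma> q \<in> elts \<tau>}))"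

definition forcing_ext :: "V set \<Rightarrow> V \<Rightarrow> V set \<Rightarrow> V set" where
  "forcing_ext u Pset I = val I ` names_in u Pset"

text \<open>States are the elements of I; accessibility is the ordering restricted to I.
Properties of states are modelled as predicates on states.\<close>

definition dia :: "V \<Rightarrow> V set \<Rightarrow> (V \<Rightarrow> bool) \<Rightarrow> V \<Rightarrow> bool" where
  "dia leP I \<psi> s \<longleftrightarrow> (\<exists>t\<in>I. leq leP s t \<and> \<psi> t)"

definition box :: "V \<Rightarrow> V set \<Rightarrow> (V \<Rightarrow> bool) \<Rightarrow> V \<Rightarrow> bool" where
  "box leP I \<psi> s \<longleftrightarrow> (\<forall>t\<in>I. leq leP s t \<longrightarrow> \<psi> t)"

definition model_valid :: "V set \<Rightarrow> (V \<Rightarrow> bool) \<Rightarrow> bool" where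
  "model_valid I \<psi> \<longleftrightarrow> (\<forall>s\<in>I. \<psi> s)"

definition in_star :: "V set \<Rightarrow> V \<Rightarrow> V \<Rightarrow> V \<Rightarrow> V \<Rightarrow> V \<Rightarrow> bool" where
  "in_star u Pset leP x y s \<longleftrightarrow>
     x \<in> names_in u Pset \<and> y \<in> names_in u Pset \<and>
     (\<exists>s'\<in>elts Pset. leq leP s' s \<and> vpair x s' \<in> elts y)"

definition tilde_in :: "V set \<Rightarrow> V \<Rightarrow> V \<Rightarrow> V set \<Rightarrow> (V \<times> V) set" where
  "tilde_in u Pset leP I =
     {(\<sigma>, \<tau>). \<sigma> \<in> names_in u Pset \<and> \<tau> \<in> names_in u Pset \<and>
        model_valid I (dia leP I (box leP I (in_star u Pset leP \<sigma> \<tau>)))}"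

definition mostowski :: "(V \<times> V) set \<Rightarrow> V \<Rightarrow> V" where
  "mostowski R = wfrec R (\<lambda>f \<tau>. mk (f ` {\<sigma>. (\<sigma>, \<tau>) \<in> R}))"

end

theory Submission
  imports Defs
begin

text \<open>At a state s the relation \<sigma> \<in>* \<tau> says that \<tau> contains a pair \<langle>\<sigma>, s'\<rangle> with
s' \<le> s.  Because I is downward closed, \<box>(\<sigma> \<in>* \<tau>) at some state of I yields such a
pair with s' \<in> I; conversely, because I is directed, a pair \<langle>\<sigma>, q\<rangle> \<in> \<tau> with q \<in> I
makes \<sigma> \<in>* \<tau> hold at every state above a common upper bound of s and q.  So the
relation \<sigma> ~\<in> \<tau> is exactly the relation along which val_I recurses, restricted to
names.  That relation lies inside the transitive closure of \<in>, hence is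
well-founded, and the Mostowski collapse and val_I satisfy the same recursion.\<close>

lemma elts_mk_finite: "finite A \<Longrightarrow> elts (mk A) = A"
  by (simp add: mk_def acset_inverse countable_finite)

lemma mk_finite_inject: "finite A \<Longrightarrow> finite B \<Longrightarrow> mk A = mk B \<Longrightarrow> A = B"
  by (metis elts_mk_finite)

lemma vpair_inject1: "vpair a b = vpair c d \<Longrightarrow> a = c"
proof -
  assume "vpair a b = vpair c d"
  then have "{mk {a}, mk {a, b}} = {mk {c}, mk {c, d}}"
    unfolding vpair_def by (rule mk_finite_inject[rotated 2]) auto
  then have "mk {a} = mk {c} \<or> mk {a} = mk {c, d}" by blast
  then show "a = c"
  proof
    assume "mk {a} = mk {c}"
    then have "{a} = {c}" by (rule mk_finite_inject[rotated 2]) auto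
    then show "a = c" by simp
  next
    assume "mk {a} = mk {c, d}"
    then have "{a} = {c, d}" by (rule mk_finite_inject[rotated 2]) auto
    then show "a = c" by blast
  qed
qed

lemma wf_memrel: "wf memrel"
proof (rule wfUNIVI)
  fix P :: "V \<Rightarrow> bool" and x
  assume step: "\<forall>x. (\<forall>y. (y, x) \<in> memrel \<longrightarrow> P y) \<longrightarrow> P x"
  show "P x"
  proof (induction x)
    case (Set A)
    then show ?case using step by (auto simp: memrel_def)
  qed
qed

lemma wf_trancl_memrel: "wf (memrel\<^sup>+)"
  using wf_memrel by (rule wf_trancl)

lemma vpair_in_elts_trancl_memrel: "vpair \<sigma> q \<in> elts \<tau> \<Longrightarrow> (\<sigma>, \<tau>) \<in> memrel\<^sup>+"
proof -
  assume pair: "vpair \<sigma> q \<in> elts \<tau>"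
  have "(\<sigma>, mk {\<sigma>}) \<in> memrel" by (simp add: memrel_def elts_mk_finite)
  moreover have "(mk {\<sigma>}, vpair \<sigma> q) \<in> memrel"
    by (simp add: memrel_def elts_mk_finite vpair_def)
  moreover have "(vpair \<sigma> q, \<tau>) \<in> memrel" using pair by (simp add: memrel_def)
  ultimately show ?thesis by (meson trancl.r_into_trancl trancl.trancl_into_trancl)
qed

lemma names_in_vpair_in_elts:
  assumes "transitive_set u" "\<tau> \<in> names_in u Pset" "vpair \<sigma> q \<in> elts \<tau>"
  shows "\<sigma> \<in> names_in u Pset"
proof -
  have \<tau>: "is_name Pset \<tau>" "\<tau> \<in> u" using assms(2) by (auto simp: names_in_def)
  from \<tau>(1) obtain \<sigma>' p where "vpair \<sigma> q = vpair \<sigma>' p" "is_name Pset \<sigma>'"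
    using assms(3) by (cases rule: is_name.cases) blast
  then have "is_name Pset \<sigma>" using vpair_inject1 by blast
  moreover have "vpair \<sigma> q \<in> u" using assms(1,3) \<tau>(2) by (auto simp: transitive_set_def)
  then have "mk {\<sigma>} \<in> u" using assms(1) by (auto simp: transitive_set_def vpair_def elts_mk_finite)
  then have "\<sigma> \<in> u" using assms(1) by (auto simp: transitive_set_def elts_mk_finite)
  ultimately show ?thesis by (simp add: names_in_def)
qed

definition name_mem :: "V set \<Rightarrow> (V \<times> V) set" where
  "name_mem I = {(\<sigma>, \<tau>). \<exists>q\<in>I. vpair \<sigma> q \<in> elts \<tau>}"

lemma name_mem_subset_trancl_memrel: "name_mem I \<subseteq> memrel\<^sup>+"
  by (auto simp: name_mem_def intro: vpair_in_elts_trancl_memrel)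

lemma val_eq: "val I \<tau> = mk (val I ` {\<sigma>. (\<sigma>, \<tau>) \<in> name_mem I})"
proof -
  have "val I \<tau> = mk (cut (val I) (memrel\<^sup>+) \<tau> ` {\<sigma>. (\<sigma>, \<tau>) \<in> name_mem I})"
    unfolding val_def name_mem_def by (subst wfrec[OF wf_trancl_memrel]) simp
  also have "cut (val I) (memrel\<^sup>+) \<tau> ` {\<sigma>. (\<sigma>, \<tau>) \<in> name_mem I}
      = val I ` {\<sigma>. (\<sigma>, \<tau>) \<in> name_mem I}"
    using name_mem_subset_trancl_memrel by (intro image_cong) (auto intro!: cut_apply)
  finally show ?thesis .
qed

lemma mostowski_eq: "wf R \<Longrightarrow> mostowski R \<tau> = mk (mostowski R ` {\<sigma>. (\<sigma>, \<tau>) \<in> R})"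
  unfolding mostowski_def by (subst wfrec) (auto simp: cut_apply intro!: arg_cong[where f = mk])

lemma wf_name_mem_restrict: "wf (name_mem I \<inter> N \<times> N)"
  by (rule wf_subset[OF wf_trancl_memrel]) (use name_mem_subset_trancl_memrel in blast)

lemma mostowski_name_mem_restrict_eq_val:
  assumes closed: "\<And>\<sigma> \<tau>. \<tau> \<in> N \<Longrightarrow> (\<sigma>, \<tau>) \<in> name_mem I \<Longrightarrow> \<sigma> \<in> N"
  shows "\<tau> \<in> N \<Longrightarrow> mostowski (name_mem I \<inter> N \<times> N) \<tau> = val I \<tau>"
proof (induction \<tau> rule: wf_induct_rule[OF wf_name_mem_restrict[of I N]])
  case (1 \<tau>)
  let ?R = "name_mem I \<inter> N \<times> N"
  have below: "{\<sigma>. (\<sigma>, \<tau>) \<in> ?R} = {\<sigma>. (\<sigma>, \<tau>) \<in> name_mem I}"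
    using closed "1.prems" by blast
  have "mostowski ?R \<tau> = mk (mostowski ?R ` {\<sigma>. (\<sigma>, \<tau>) \<in> ?R})"
    by (rule mostowski_eq[OF wf_name_mem_restrict])
  also have "mostowski ?R ` {\<sigma>. (\<sigma>, \<tau>) \<in> ?R} = val I ` {\<sigma>. (\<sigma>, \<tau>) \<in> name_mem I}"
  proof (rule image_cong[OF below])
    fix \<sigma> assume "\<sigma> \<in> {\<sigma>. (\<sigma>, \<tau>) \<in> name_mem I}"
    then have "(\<sigma>, \<tau>) \<in> ?R" using below by blast
    then show "mostowski ?R \<sigma> = val I \<sigma>" using "1.IH" by blast
  qed
  also have "mk (val I ` {\<sigma>. (\<sigma>, \<tau>) \<in> name_mem I}) = val I \<tau>"
    by (rule val_eq[symmetric])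
  finally show ?case .
qed

lemma in_star_imp_name_mem:
  assumes "is_ideal Pset leP I" "t \<in> I" "in_star u Pset leP \<sigma> \<tau> t"
  shows "(\<sigma>, \<tau>) \<in> name_mem I"
  using assms by (auto simp: in_star_def is_ideal_def name_mem_def)

lemma name_mem_imp_dia_box_in_star:
  assumes trans: "\<forall>p\<in>elts Pset. \<forall>q\<in>elts Pset. \<forall>r\<in>elts Pset.
      leq leP p q \<and> leq leP q r \<longrightarrow> leq leP p r"
    and ideal: "is_ideal Pset leP I"
    and names: "\<sigma> \<in> names_in u Pset" "\<tau> \<in> names_in u Pset"
    and mem: "(\<sigma>, \<tau>) \<in> name_mem I" and "s \<in> I"
  shows "dia leP I (box leP I (in_star u Pset leP \<sigma> \<tau>)) s"
proof -
  obtain q where q: "q \<in> I" "vpair \<sigma> q \<in> elts \<tau>"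
    using mem by (auto simp: name_mem_def)
  obtain t where t: "t \<in> I" "leq leP s t" "leq leP q t"
    using ideal q(1) \<open>s \<in> I\<close> unfolding is_ideal_def by blast
  have "in_star u Pset leP \<sigma> \<tau> t'" if t': "t' \<in> I" "leq leP t t'" for t'
  proof -
    have "I \<subseteq> elts Pset" using ideal by (simp add: is_ideal_def)
    with trans t q(1) t' have "leq leP q t'" by blast
    with names q \<open>I \<subseteq> elts Pset\<close> show ?thesis unfolding in_star_def by blast
  qed
  with t show ?thesis unfolding dia_def box_def by blast
qed

lemma tilde_in_eq_name_mem_restrict:
  assumes refl: "\<forall>p\<in>elts Pset. leq leP p p"
    and trans: "\<forall>p\<in>elts Pset. \<forall>q\<in>elts Pset. \<forall>r\<in>elts Pset.
      leq leP p q \<and> leq leP q r \<longrightarrow> leq leP p r"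
    and ideal: "is_ideal Pset leP I" and "I \<noteq> {}"
  shows "tilde_in u Pset leP I = name_mem I \<inter> names_in u Pset \<times> names_in u Pset"
proof (intro subset_antisym subrelI)
  fix \<sigma> \<tau> assume "(\<sigma>, \<tau>) \<in> tilde_in u Pset leP I"
  then have names: "\<sigma> \<in> names_in u Pset" "\<tau> \<in> names_in u Pset"
    and valid: "model_valid I (dia leP I (box leP I (in_star u Pset leP \<sigma> \<tau>)))"
    by (simp_all add: tilde_in_def)
  obtain s where "s \<in> I" using \<open>I \<noteq> {}\<close> by blast
  with valid obtain t where t: "t \<in> I" "box leP I (in_star u Pset leP \<sigma> \<tau>) t"
    unfolding model_valid_def dia_def by blast
  have "leq leP t t" using refl ideal t(1) unfolding is_ideal_def by blast
  with t have "in_star u Pset leP \<sigma> \<tau> t" unfolding box_def by blast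
  with ideal t(1) have "(\<sigma>, \<tau>) \<in> name_mem I" by (rule in_star_imp_name_mem)
  with names show "(\<sigma>, \<tau>) \<in> name_mem I \<inter> names_in u Pset \<times> names_in u Pset" by blast
next
  fix \<sigma> \<tau> assume "(\<sigma>, \<tau>) \<in> name_mem I \<inter> names_in u Pset \<times> names_in u Pset"
  then have "model_valid I (dia leP I (box leP I (in_star u Pset leP \<sigma> \<tau>)))"
    unfolding model_valid_def using name_mem_imp_dia_box_in_star[OF trans ideal] by blast
  with \<open>(\<sigma>, \<tau>) \<in> name_mem I \<inter> _\<close> show "(\<sigma>, \<tau>) \<in> tilde_in u Pset leP I"
    by (simp add: tilde_in_def)
qed

theorem mainTheorem5:
  fixes u :: "V set" and Pset leP zero :: V and I :: "V set"
  assumes "countable_transitive_ZF_minus_model u"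
    and "Pset \<in> u" and "leP \<in> u" and "zero \<in> u"
    and "partial_order_least Pset leP zero"
    and "is_ideal Pset leP I" and "I \<noteq> {}"
  shows "wf (tilde_in u Pset leP I)
     \<and> (\<forall>\<tau>\<in>names_in u Pset. mostowski (tilde_in u Pset leP I) \<tau> = val I \<tau>)
     \<and> mostowski (tilde_in u Pset leP I) ` names_in u Pset = forcing_ext u Pset I"
proof -
  have "transitive_set u"
    using assms(1) by (simp add: countable_transitive_ZF_minus_model_def)
  have tilde_in: "tilde_in u Pset leP I = name_mem I \<inter> names_in u Pset \<times> names_in u Pset"
    using assms(5-7) unfolding partial_order_least_def
    by (intro tilde_in_eq_name_mem_restrict) blast+
  have collapse: "\<forall>\<tau>\<in>names_in u Pset. mostowski (tilde_in u Pset leP I) \<tau> = val I \<tau>"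
    unfolding tilde_in
    by (intro ballI mostowski_name_mem_restrict_eq_val)
      (auto simp: name_mem_def intro: names_in_vpair_in_elts[OF \<open>transitive_set u\<close>])
  then show ?thesis
    unfolding forcing_ext_def tilde_in by (simp add: wf_name_mem_restrict)
qed

end
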